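(* Let $X$ be a simplicial complex with vertex set $V$ and $1$-skeleton $\mathcal G$. Let $\hat d$ be a metric on $V$ that is $(A,B)$-quasi-isometric to $d_{\mathcal G}$ for constants $A\ge1$, $B\ge0$, i.e. $\frac1A d_{\mathcal G}(u,v)-B\le \hat d(u,v)\le A\,d_{\mathcal G}(u,v)+B$ for all $u,v\in V$. Then there is a metric $\tilde d$ on $X$ extending $\hat d$ (namely $\tilde d(x,y)=\min\{\hat D(x,y),3(A+B)d_X(x,y)\}$) such that: (1) if $x,y\in X$ have disjoint supports then $\tilde d(x,y)=\hat D(x,y)$; (2) there is a constant $B'\ge0$ (one may take $B'=2(A+B)$) such that for all $x,y\in X$, \[\hat D(x,y)-B'\le \tilde d(x,y)\le \hat D(x,y)+B'.\]
   Context: Points $x\in X$ have barycentric coordinates $(x_u)_{u\in V}$ (finitely many nonzero, summing to $1$); $\mathrm{supp}(x)=\{u\in V:x_u\neq0\}$. $\hat D(x,y)=\sum_{u,v\in V}x_uy_v\,\hat d(u,v)$ is the bilinear extension of $\hat d$. $d_{\mathcal G}$ is the word metric on the $1$-skeleton (every edge length $1$). For a simplex $\sigma$ and $x,y\in\sigma$, $d_\sigma(x,y)=\tfrac12\sum_{u\in V(\sigma)}|x_u-y_u|$; a path from $x$ to $y$ is a sequence $x=a_0,\dots,a_r=y$ with consecutive points in a common simplex $\sigma_i$, of length $\sum_i d_{\sigma_i}(a_{i-1},a_i)$; the $\ell^1$-path metric $d_X(x,y)$ is the infimum of lengths of such paths. *)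

theory Defs
  imports Complex_Main "HOL-Library.Extended_Nat"
begin

definition simplicial_complex :: "'v set set \<Rightarrow> bool" where
  "simplicial_complex K \<longleftrightarrow>
     (\<forall>\<sigma>\<in>K. finite \<sigma> \<and> \<sigma> \<noteq> {}) \<and>
     (\<forall>\<sigma>\<in>K. \<forall>\<tau>. \<tau> \<subseteq> \<sigma> \<and> \<tau> \<noteq> {} \<longrightarrow> \<tau> \<in> K)"

definition vertices :: "'v set set \<Rightarrow> 'v set" where
  "vertices K = \<Union>K"

definition supp :: "('v \<Rightarrow> real) \<Rightarrow> 'v set" where
  "supp x = {u. x u \<noteq> 0}"

text \<open>Points of the geometric realisation |K|, in barycentric coordinates.\<close>
definition points :: "'v set set \<Rightarrow> ('v \<Rightarrow> real) set" where
  "points K = {x. (\<forall>u. x u \<ge> 0) \<and> supp x \<in> K \<and> (\<Sum>u\<in>supp x. x u) = 1}"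

definition vpt :: "'v \<Rightarrow> ('v \<Rightarrow> real)" where
  "vpt u = (\<lambda>w. if w = u then 1 else 0)"

definition bilin_ext :: "('v \<Rightarrow> 'v \<Rightarrow> real) \<Rightarrow> ('v \<Rightarrow> real) \<Rightarrow> ('v \<Rightarrow> real) \<Rightarrow> real" where
  "bilin_ext d x y = (\<Sum>u\<in>supp x. \<Sum>v\<in>supp y. x u * y v * d u v)"

text \<open>Edge walks in the 1-skeleton and the word metric (value \<infinity> if no walk exists).\<close>
definition is_walk :: "'v set set \<Rightarrow> 'v list \<Rightarrow> bool" where
  "is_walk K ws \<longleftrightarrow> ws \<noteq> [] \<and> set ws \<subseteq> vertices K \<and>
     (\<forall>i. Suc i < length ws \<longrightarrow> ws!i \<noteq> ws!Suc i \<and> {ws!i, ws!Suc i} \<in> K)"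

definition graph_dist :: "'v set set \<Rightarrow> 'v \<Rightarrow> 'v \<Rightarrow> enat" where
  "graph_dist K u v = (INF ws\<in>{ws. is_walk K ws \<and> hd ws = u \<and> last ws = v}. enat (length ws - 1))"

definition simplex_dist :: "'v set \<Rightarrow> ('v \<Rightarrow> real) \<Rightarrow> ('v \<Rightarrow> real) \<Rightarrow> real" where
  "simplex_dist \<sigma> x y = (1/2) * (\<Sum>u\<in>\<sigma>. \<bar>x u - y u\<bar>)"

definition is_path :: "'v set set \<Rightarrow> ('v \<Rightarrow> real) list \<Rightarrow> 'v set list \<Rightarrow> bool" where
  "is_path K ps ss \<longleftrightarrow> ps \<noteq> [] \<and> length ss + 1 = length ps \<and> set ps \<subseteq> points K \<and> set ss \<subseteq> K \<and>
     (\<forall>i<length ss. supp (ps!i) \<subseteq> ss!i \<and> supp (ps!Suc i) \<subseteq> ss!i)"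

definition path_length :: "('v \<Rightarrow> real) list \<Rightarrow> 'v set list \<Rightarrow> real" where
  "path_length ps ss = (\<Sum>i<length ss. simplex_dist (ss!i) (ps!i) (ps!Suc i))"

definition path_metric :: "'v set set \<Rightarrow> ('v \<Rightarrow> real) \<Rightarrow> ('v \<Rightarrow> real) \<Rightarrow> real" where
  "path_metric K x y = Inf {path_length ps ss | ps ss. is_path K ps ss \<and> hd ps = x \<and> last ps = y}"

definition metric_on :: "'a set \<Rightarrow> ('a \<Rightarrow> 'a \<Rightarrow> real) \<Rightarrow> bool" where
  "metric_on S d \<longleftrightarrow>
     (\<forall>x\<in>S. \<forall>y\<in>S. 0 \<le> d x y \<and> (d x y = 0 \<longleftrightarrow> x = y) \<and> d x y = d y x) \<and>
     (\<forall>x\<in>S. \<forall>y\<in>S. \<forall>z\<in>S. d x z \<le> d x y + d y z)"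

text \<open>(A,B)-quasi-isometry of dhat to the word metric; in particular d_G is finite.\<close>
definition quasi_isometric :: "'v set set \<Rightarrow> ('v \<Rightarrow> 'v \<Rightarrow> real) \<Rightarrow> real \<Rightarrow> real \<Rightarrow> bool" where
  "quasi_isometric K dh A B \<longleftrightarrow>
     (\<forall>u\<in>vertices K. \<forall>v\<in>vertices K. \<exists>n::nat. graph_dist K u v = enat n \<and>
        (1/A) * real n - B \<le> dh u v \<and> dh u v \<le> A * real n + B)"

end

theory Submission
  imports Defs
begin

text \<open>The bilinear extension \<open>D\<close> of \<open>dh\<close> is symmetric, satisfies the triangle inequality and
  vanishes only at pairs \<open>(v, v)\<close> of vertices, but \<open>D x x\<close> may be positive. Vertices of a common
  simplex are adjacent in the 1-skeleton, so \<open>dh \<le> A + B\<close> on every simplex; hence \<open>D x x \<le> A + B\<close>,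
  and \<open>D\<close> is \<open>2(A + B)\<close>-Lipschitz in each argument along every simplex, thus with respect to the path
  metric \<open>d_X\<close>. The resulting cross estimate \<open>D x z \<le> D x y + 3(A + B) d_X y z\<close> is what makes the
  minimum of \<open>D\<close> with the metric \<open>3(A + B) d_X\<close> a metric. Finally \<open>d_X\<close> dominates half the
  \<open>\<ell>\<^sup>1\<close>-distance of barycentric coordinates, so \<open>d_X x y \<ge> 1\<close> for disjoint supports, and then
  \<open>D x y \<le> D x x + 2(A + B) d_X x y \<le> 3(A + B) d_X x y\<close>; in general the same estimate shows that the
  minimum differs from \<open>D\<close> by at most \<open>A + B\<close>.\<close>

lemma metric_on_scale:
  assumes "metric_on S d" and "0 < c"
  shows "metric_on S (\<lambda>x y. c * d x y)"
  using assms unfolding metric_on_def by (auto simp: distrib_left[symmetric] mult_left_mono)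

text \<open>\<open>d1\<close> need not vanish on the diagonal; the minimum with the metric \<open>d2\<close> repairs that.\<close>

lemma metric_on_min:
  assumes d1: "\<And>x y. x \<in> S \<Longrightarrow> y \<in> S \<Longrightarrow> 0 \<le> d1 x y \<and> d1 x y = d1 y x \<and> (d1 x y = 0 \<longrightarrow> x = y)"
    and d1_triangle: "\<And>x y z. x \<in> S \<Longrightarrow> y \<in> S \<Longrightarrow> z \<in> S \<Longrightarrow> d1 x z \<le> d1 x y + d1 y z"
    and d2: "metric_on S d2"
    and cross: "\<And>x y z. x \<in> S \<Longrightarrow> y \<in> S \<Longrightarrow> z \<in> S \<Longrightarrow> d1 x z \<le> d1 x y + d2 y z"
  shows "metric_on S (\<lambda>x y. min (d1 x y) (d2 x y))"
  unfolding metric_on_def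
proof (intro conjI ballI)
  fix x y assume x: "x \<in> S" and y: "y \<in> S"
  have "0 \<le> d2 x y" "d2 x y = d2 y x" "d2 x y = 0 \<longleftrightarrow> x = y" "d2 x x = 0"
    using d2 x y unfolding metric_on_def by blast+
  with d1[OF x y] d1[OF x x]
  show "0 \<le> min (d1 x y) (d2 x y)" "min (d1 x y) (d2 x y) = min (d1 y x) (d2 y x)"
    "min (d1 x y) (d2 x y) = 0 \<longleftrightarrow> x = y"
    by (auto simp: min_def)
next
  fix x y z assume x: "x \<in> S" and y: "y \<in> S" and z: "z \<in> S"
  have "d1 x z = d1 z x" "d1 y z = d1 z y" using d1 x y z by blast+
  moreover have "d2 x y = d2 y x" "d2 x z \<le> d2 x y + d2 y z"
    using d2 x y z unfolding metric_on_def by blast+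
  ultimately have "d1 x z \<le> d2 x y + d1 y z" "d2 x z \<le> d2 x y + d2 y z"
    using cross[OF z y x] by simp_all
  then show "min (d1 x z) (d2 x z) \<le> min (d1 x y) (d2 x y) + min (d1 y z) (d2 y z)"
    using cross[OF x y z] d1_triangle[OF x y z] by (simp add: min_def)
qed

lemma simplicial_complex_subset:
  "simplicial_complex K \<Longrightarrow> \<sigma> \<in> K \<Longrightarrow> \<tau> \<subseteq> \<sigma> \<Longrightarrow> \<tau> \<noteq> {} \<Longrightarrow> \<tau> \<in> K"
  unfolding simplicial_complex_def by blast

lemma simplicial_complex_finite: "simplicial_complex K \<Longrightarrow> \<sigma> \<in> K \<Longrightarrow> finite \<sigma>"
  unfolding simplicial_complex_def by blast

lemma simplex_subset_vertices: "\<sigma> \<in> K \<Longrightarrow> \<sigma> \<subseteq> vertices K"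
  unfolding vertices_def by auto

lemma pointsD:
  assumes "x \<in> points K" and "simplicial_complex K"
  shows "supp x \<in> K" "finite (supp x)" "supp x \<noteq> {}" "supp x \<subseteq> vertices K"
    "\<And>u. 0 \<le> x u" "sum x (supp x) = 1"
  using assms unfolding points_def simplicial_complex_def vertices_def by auto

lemma supp_vpt [simp]: "supp (vpt u) = {u}"
  by (auto simp: supp_def vpt_def)

lemma vpt_in_points: "simplicial_complex K \<Longrightarrow> u \<in> vertices K \<Longrightarrow> vpt u \<in> points K"
proof -
  assume sc: "simplicial_complex K" and "u \<in> vertices K"
  then obtain \<sigma> where "\<sigma> \<in> K" "u \<in> \<sigma>" unfolding vertices_def by auto
  then have "{u} \<in> K" using simplicial_complex_subset[OF sc] by blast
  moreover have "\<forall>w. 0 \<le> vpt u w" "sum (vpt u) {u} = 1" by (auto simp: vpt_def)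
  ultimately show ?thesis unfolding points_def by simp
qed

lemma sum_supp_mult:
  "finite T \<Longrightarrow> supp x \<subseteq> T \<Longrightarrow> (\<Sum>u\<in>supp x. x u * h u) = (\<Sum>u\<in>T. x u * h u)"
  by (rule sum.mono_neutral_left) (auto simp: supp_def)

lemma sum_supp: "finite T \<Longrightarrow> supp x \<subseteq> T \<Longrightarrow> sum x (supp x) = sum x T"
  using sum_supp_mult[where h = "\<lambda>_. 1"] by simp

lemma simplex_dist_nonneg: "0 \<le> simplex_dist \<sigma> a b"
  unfolding simplex_dist_def by (simp add: sum_nonneg)

lemma simplex_dist_commute: "simplex_dist \<sigma> a b = simplex_dist \<sigma> b a"
  unfolding simplex_dist_def by (simp add: abs_minus_commute)

section \<open>Chains of simplices\<close>

text \<open>An inductive form of \<open>is_path\<close> that avoids list indexing.\<close>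

inductive chain :: "'v set set \<Rightarrow> ('v \<Rightarrow> real) \<Rightarrow> ('v \<Rightarrow> real) \<Rightarrow> real \<Rightarrow> bool" for K where
  chain_refl: "x \<in> points K \<Longrightarrow> chain K x x 0"
| chain_step: "chain K x y l \<Longrightarrow> z \<in> points K \<Longrightarrow> \<sigma> \<in> K \<Longrightarrow> supp y \<subseteq> \<sigma> \<Longrightarrow> supp z \<subseteq> \<sigma>
    \<Longrightarrow> chain K x z (l + simplex_dist \<sigma> y z)"

lemma chain_points: "chain K x y l \<Longrightarrow> x \<in> points K \<and> y \<in> points K"
  by (induction rule: chain.induct) auto

lemma chain_nonneg: "chain K x y l \<Longrightarrow> 0 \<le> l"
  by (induction rule: chain.induct) (auto intro: add_nonneg_nonneg simplex_dist_nonneg)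

lemma chain_trans: "chain K y z l2 \<Longrightarrow> chain K x y l1 \<Longrightarrow> chain K x z (l1 + l2)"
proof (induction rule: chain.induct)
  case (chain_step x y l z \<sigma>)
  then show ?case using chain.chain_step[of K _ y "l1 + l" z \<sigma>] by (simp add: add.assoc)
qed simp

lemma chain_single:
  "x \<in> points K \<Longrightarrow> y \<in> points K \<Longrightarrow> \<sigma> \<in> K \<Longrightarrow> supp x \<subseteq> \<sigma> \<Longrightarrow> supp y \<subseteq> \<sigma>
    \<Longrightarrow> chain K x y (simplex_dist \<sigma> x y)"
  using chain.chain_step[OF chain_refl, of x K y \<sigma>] by simp

lemma chain_sym: "chain K x y l \<Longrightarrow> chain K y x l"
proof (induction rule: chain.induct)
  case (chain_refl x)
  then show ?case by (rule chain.chain_refl)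
next
  case (chain_step x y l z \<sigma>)
  have "chain K z y (simplex_dist \<sigma> z y)"
    using chain_step chain_points[OF chain_step.hyps(1)] by (intro chain_single) auto
  from chain_trans[OF chain_step.IH this] show ?case
    by (simp add: simplex_dist_commute add.commute)
qed

lemma chain_Lipschitz:
  assumes lip: "\<And>a b \<sigma>. a \<in> points K \<Longrightarrow> b \<in> points K \<Longrightarrow> \<sigma> \<in> K \<Longrightarrow> supp a \<subseteq> \<sigma> \<Longrightarrow> supp b \<subseteq> \<sigma>
      \<Longrightarrow> f b - f a \<le> C * simplex_dist \<sigma> a b"
  shows "chain K x y l \<Longrightarrow> f y - f x \<le> C * l"
proof (induction rule: chain.induct)
  case (chain_step x y l z \<sigma>)
  have "f z - f y \<le> C * simplex_dist \<sigma> y z"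
    using chain_step chain_points[OF chain_step.hyps(1)] by (intro lip) auto
  then show ?case using chain_step.IH by (simp add: distrib_left)
qed simp

lemma is_path_imp_chain:
  assumes "is_path K ps ss"
  shows "chain K (hd ps) (last ps) (path_length ps ss)"
proof -
  have ne: "ps \<noteq> []" and len: "length ss + 1 = length ps" and pts: "set ps \<subseteq> points K"
    and sk: "set ss \<subseteq> K"
    and sp: "\<And>i. i < length ss \<Longrightarrow> supp (ps!i) \<subseteq> ss!i \<and> supp (ps!Suc i) \<subseteq> ss!i"
    using assms unfolding is_path_def by auto
  have "n \<le> length ss \<Longrightarrow> chain K (ps!0) (ps!n) (\<Sum>i<n. simplex_dist (ss!i) (ps!i) (ps!Suc i))" for n
  proof (induction n)
    case 0
    then show ?case using ne pts by (auto intro!: chain_refl)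
  next
    case (Suc n)
    have "ps ! Suc n \<in> points K" "ss ! n \<in> K" using Suc.prems len pts sk by (auto simp: subset_iff)
    then show ?case using Suc sp[of n] by (auto intro: chain_step)
  qed
  moreover have "length ps - 1 = length ss" using len by simp
  ultimately show ?thesis using ne by (simp add: hd_conv_nth last_conv_nth path_length_def)
qed

lemma path_length_snoc:
  assumes "length ss + 1 = length ps"
  shows "path_length (ps @ [z]) (ss @ [\<sigma>]) = path_length ps ss + simplex_dist \<sigma> (last ps) z"
proof -
  have "path_length (ps @ [z]) (ss @ [\<sigma>]) =
      (\<Sum>i<length ss. simplex_dist ((ss @ [\<sigma>])!i) ((ps @ [z])!i) ((ps @ [z])!Suc i))
      + simplex_dist \<sigma> (ps ! length ss) z"
    using assms unfolding path_length_def length_append_singleton sum.lessThan_Suc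
    by (simp add: nth_append del: sum.lessThan_Suc)
  also have "(\<Sum>i<length ss. simplex_dist ((ss @ [\<sigma>])!i) ((ps @ [z])!i) ((ps @ [z])!Suc i))
      = path_length ps ss"
    unfolding path_length_def using assms by (intro sum.cong) (auto simp: nth_append)
  also have "ps ! length ss = last ps"
    using assms by (cases ps rule: rev_cases) auto
  finally show ?thesis .
qed

lemma is_path_snoc:
  assumes "is_path K ps ss" "z \<in> points K" "\<sigma> \<in> K" "supp (last ps) \<subseteq> \<sigma>" "supp z \<subseteq> \<sigma>"
  shows "is_path K (ps @ [z]) (ss @ [\<sigma>])"
proof -
  have len: "length ps = Suc (length ss)" using assms(1) unfolding is_path_def by auto
  then have "last ps = ps ! length ss" by (cases ps rule: rev_cases) (auto simp: nth_append)
  then show ?thesis using assms len unfolding is_path_def by (auto simp: nth_append less_Suc_eq)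
qed

lemma chain_imp_is_path:
  "chain K x y l \<Longrightarrow> \<exists>ps ss. is_path K ps ss \<and> hd ps = x \<and> last ps = y \<and> path_length ps ss = l"
proof (induction rule: chain.induct)
  case (chain_refl x)
  then have "is_path K [x] []" by (simp add: is_path_def)
  then show ?case by (force simp: path_length_def)
next
  case (chain_step x y l z \<sigma>)
  then obtain ps ss where p: "is_path K ps ss" "hd ps = x" "last ps = y" "path_length ps ss = l"
    by blast
  then have "is_path K (ps @ [z]) (ss @ [\<sigma>])"
    using chain_step by (intro is_path_snoc) auto
  moreover have "path_length (ps @ [z]) (ss @ [\<sigma>]) = l + simplex_dist \<sigma> y z"
    using p path_length_snoc[of ss ps] by (simp add: is_path_def)
  ultimately show ?case using p by (intro exI[of _ "ps @ [z]"] exI[of _ "ss @ [\<sigma>]"])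
      (auto simp: is_path_def)
qed

lemma path_metric_eq_Inf_chain: "path_metric K x y = Inf {l. chain K x y l}"
proof -
  have "{path_length ps ss | ps ss. is_path K ps ss \<and> hd ps = x \<and> last ps = y} = {l. chain K x y l}"
    using is_path_imp_chain chain_imp_is_path by fastforce
  then show ?thesis unfolding path_metric_def by simp
qed

lemma path_metric_le_chain: "chain K x y l \<Longrightarrow> path_metric K x y \<le> l"
  unfolding path_metric_eq_Inf_chain
  by (rule cInf_lower) (auto intro!: bdd_belowI[of _ 0] dest: chain_nonneg)

lemma path_metric_ge_chain:
  "chain K x y l0 \<Longrightarrow> (\<And>l. chain K x y l \<Longrightarrow> a \<le> l) \<Longrightarrow> a \<le> path_metric K x y"
  unfolding path_metric_eq_Inf_chain by (rule cInf_greatest) auto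

lemma path_metric_Lipschitz:
  assumes "chain K a b l0" and "0 \<le> C"
    and lip: "\<And>a b \<sigma>. a \<in> points K \<Longrightarrow> b \<in> points K \<Longrightarrow> \<sigma> \<in> K \<Longrightarrow> supp a \<subseteq> \<sigma> \<Longrightarrow> supp b \<subseteq> \<sigma>
      \<Longrightarrow> f b - f a \<le> C * simplex_dist \<sigma> a b"
  shows "f b - f a \<le> C * path_metric K a b"
proof (cases "C = 0")
  case True
  then show ?thesis using chain_Lipschitz[OF lip assms(1)] by simp
next
  case False
  with assms(2) have C: "0 < C" by simp
  have "(f b - f a) / C \<le> path_metric K a b"
    using chain_Lipschitz[OF lip] C
    by (intro path_metric_ge_chain[OF assms(1)]) (simp add: pos_divide_le_eq mult.commute)
  then show ?thesis using C by (simp add: pos_divide_le_eq mult.commute)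
qed

definition connected_complex :: "'v set set \<Rightarrow> bool" where
  "connected_complex K \<longleftrightarrow>
     (\<forall>u\<in>vertices K. \<forall>v\<in>vertices K. \<exists>ws. is_walk K ws \<and> hd ws = u \<and> last ws = v)"

lemma walk_imp_chain:
  assumes "simplicial_complex K"
  shows "is_walk K ws \<Longrightarrow> \<exists>l. chain K (vpt (hd ws)) (vpt (last ws)) l"
proof (induction ws)
  case (Cons a ws)
  have a: "a \<in> vertices K" using Cons.prems unfolding is_walk_def by auto
  show ?case
  proof (cases "ws = []")
    case True
    then show ?thesis using chain_refl[OF vpt_in_points[OF assms a]] by auto
  next
    case False
    have ws: "is_walk K ws" using Cons.prems False unfolding is_walk_def
      by (auto dest: spec[of _ "Suc _"])
    have edge: "{a, hd ws} \<in> K" using Cons.prems False unfolding is_walk_def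
      by (auto dest!: spec[of _ 0] simp: hd_conv_nth)
    have "hd ws \<in> vertices K" using ws unfolding is_walk_def by auto
    then have "chain K (vpt a) (vpt (hd ws)) (simplex_dist {a, hd ws} (vpt a) (vpt (hd ws)))"
      using edge a by (intro chain_single vpt_in_points assms) auto
    moreover obtain l where "chain K (vpt (hd ws)) (vpt (last ws)) l" using Cons.IH ws by blast
    ultimately show ?thesis using chain_trans False by fastforce
  qed
qed (simp add: is_walk_def)

lemma connected_complex_chain:
  assumes sc: "simplicial_complex K" and conn: "connected_complex K"
    and x: "x \<in> points K" and y: "y \<in> points K"
  shows "\<exists>l. chain K x y l"
proof -
  obtain u v where u: "u \<in> supp x" and v: "v \<in> supp y"
    using pointsD(3)[OF x sc] pointsD(3)[OF y sc] by blast
  have uv: "u \<in> vertices K" "v \<in> vertices K" using u v pointsD(4) x y sc by blast+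
  have "chain K x (vpt u) (simplex_dist (supp x) x (vpt u))"
    "chain K y (vpt v) (simplex_dist (supp y) y (vpt v))"
    using x y u v pointsD(1)[OF _ sc] by (intro chain_single vpt_in_points sc uv; simp)+
  moreover obtain ws where "is_walk K ws" "hd ws = u" "last ws = v"
    using conn uv unfolding connected_complex_def by blast
  then obtain l where "chain K (vpt u) (vpt v) l" using walk_imp_chain[OF sc] by blast
  ultimately show ?thesis using chain_trans chain_sym by meson
qed

section \<open>The path metric\<close>

definition half_l1_dist :: "('v \<Rightarrow> real) \<Rightarrow> ('v \<Rightarrow> real) \<Rightarrow> real" where
  "half_l1_dist x y = (1/2) * (\<Sum>u\<in>supp x \<union> supp y. \<bar>y u - x u\<bar>)"

lemma half_l1_dist_eq:
  "finite T \<Longrightarrow> supp x \<union> supp y \<subseteq> T \<Longrightarrow> half_l1_dist x y = (1/2) * (\<Sum>u\<in>T. \<bar>y u - x u\<bar>)"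
  unfolding half_l1_dist_def by (subst sum.mono_neutral_left[of T]) (auto simp: supp_def)

lemma half_l1_dist_simplex_Lipschitz:
  assumes x: "finite (supp x)" and s: "finite \<sigma>" "supp a \<subseteq> \<sigma>" "supp b \<subseteq> \<sigma>"
  shows "half_l1_dist x b - half_l1_dist x a \<le> simplex_dist \<sigma> a b"
proof -
  let ?T = "\<sigma> \<union> supp x"
  have T: "finite ?T" using x s by simp
  have "a u = 0" "b u = 0" if "u \<notin> \<sigma>" for u using s that unfolding supp_def by blast+
  then have "simplex_dist \<sigma> a b = (1/2) * (\<Sum>u\<in>?T. \<bar>a u - b u\<bar>)"
    unfolding simplex_dist_def using T by (subst sum.mono_neutral_left[of ?T]) auto
  moreover have "(\<Sum>u\<in>?T. \<bar>b u - x u\<bar>) \<le> (\<Sum>u\<in>?T. \<bar>a u - x u\<bar> + \<bar>a u - b u\<bar>)"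
    by (intro sum_mono) linarith
  moreover have "half_l1_dist x a = (1/2) * (\<Sum>u\<in>?T. \<bar>a u - x u\<bar>)"
    "half_l1_dist x b = (1/2) * (\<Sum>u\<in>?T. \<bar>b u - x u\<bar>)"
    using s by (simp_all add: half_l1_dist_eq[OF T] Un_commute le_supI1)
  ultimately show ?thesis by (simp add: sum.distrib)
qed

lemma half_l1_dist_le_path_metric:
  assumes sc: "simplicial_complex K" and "chain K x y l0"
  shows "half_l1_dist x y \<le> path_metric K x y"
proof -
  have x: "finite (supp x)" using chain_points[OF assms(2)] pointsD(2) sc by blast
  have "half_l1_dist x y - half_l1_dist x x \<le> 1 * path_metric K x y"
  proof (rule path_metric_Lipschitz[OF assms(2)])
    show "half_l1_dist x b - half_l1_dist x a \<le> 1 * simplex_dist \<sigma> a b"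
      if "a \<in> points K" "b \<in> points K" "\<sigma> \<in> K" "supp a \<subseteq> \<sigma>" "supp b \<subseteq> \<sigma>" for a b \<sigma>
      using half_l1_dist_simplex_Lipschitz[OF x simplicial_complex_finite[OF sc that(3)] that(4,5)]
      by simp
  qed simp
  then show ?thesis by (simp add: half_l1_dist_def)
qed

lemma half_l1_dist_pos:
  assumes "finite (supp x)" "finite (supp y)" "x \<noteq> y"
  shows "0 < half_l1_dist x y"
proof -
  obtain t where t: "x t \<noteq> y t" using assms(3) by blast
  then have "t \<in> supp x \<union> supp y" by (auto simp: supp_def)
  then have "\<bar>y t - x t\<bar> \<le> (\<Sum>u\<in>supp x \<union> supp y. \<bar>y u - x u\<bar>)"
    using assms by (intro member_le_sum) auto
  then show ?thesis using t unfolding half_l1_dist_def by simp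
qed

lemma half_l1_dist_disjoint:
  assumes sc: "simplicial_complex K" and x: "x \<in> points K" and y: "y \<in> points K"
    and disj: "supp x \<inter> supp y = {}"
  shows "half_l1_dist x y = 1"
proof -
  note px = pointsD[OF x sc] and py = pointsD[OF y sc]
  have "(\<Sum>u\<in>supp x \<union> supp y. \<bar>y u - x u\<bar>) = (\<Sum>u\<in>supp x. \<bar>y u - x u\<bar>) + (\<Sum>u\<in>supp y. \<bar>y u - x u\<bar>)"
    using px(2) py(2) disj by (intro sum.union_disjoint) auto
  also have "\<dots> = sum x (supp x) + sum y (supp y)"
  proof -
    have "x u = 0" if "u \<in> supp y" for u using disj that by (auto simp: supp_def)
    moreover have "y u = 0" if "u \<in> supp x" for u using disj that by (auto simp: supp_def)
    ultimately show ?thesis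
      using px(5) py(5) by (intro arg_cong2[where f = "(+)"] sum.cong) auto
  qed
  finally show ?thesis unfolding half_l1_dist_def using px(6) py(6) by simp
qed

lemma metric_on_path_metric:
  assumes sc: "simplicial_complex K" and conn: "connected_complex K"
  shows "metric_on (points K) (path_metric K)"
  unfolding metric_on_def
proof (intro conjI ballI)
  fix x y assume x: "x \<in> points K" and y: "y \<in> points K"
  obtain l0 where l0: "chain K x y l0" using connected_complex_chain[OF sc conn x y] by blast
  show nonneg: "0 \<le> path_metric K x y"
    using l0 chain_nonneg by (rule path_metric_ge_chain)
  have "{l. chain K x y l} = {l. chain K y x l}" using chain_sym by blast
  then show "path_metric K x y = path_metric K y x" unfolding path_metric_eq_Inf_chain by simp
  have "0 < path_metric K x y" if "x \<noteq> y"
    using half_l1_dist_pos[OF pointsD(2)[OF x sc] pointsD(2)[OF y sc] that]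
      half_l1_dist_le_path_metric[OF sc l0] by linarith
  then show "path_metric K x y = 0 \<longleftrightarrow> x = y"
    using nonneg path_metric_le_chain[OF chain_refl[OF x]] by fastforce
next
  fix x y z assume x: "x \<in> points K" and y: "y \<in> points K" and z: "z \<in> points K"
  obtain l1 where l1: "chain K x y l1" using connected_complex_chain[OF sc conn x y] by blast
  obtain l2 where l2: "chain K y z l2" using connected_complex_chain[OF sc conn y z] by blast
  have "path_metric K x z - l \<le> path_metric K x y" if "chain K y z l" for l
  proof (rule path_metric_ge_chain[OF l1])
    fix l' assume "chain K x y l'"
    from path_metric_le_chain[OF chain_trans[OF that this]] show "path_metric K x z - l \<le> l'"
      by simp
  qed
  then have "path_metric K x z - path_metric K x y \<le> path_metric K y z"
    by (intro path_metric_ge_chain[OF l2]) (simp add: algebra_simps)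
  then show "path_metric K x z \<le> path_metric K x y + path_metric K y z" by simp
qed

lemma path_metric_ge_1_disjoint:
  assumes sc: "simplicial_complex K" and conn: "connected_complex K"
    and x: "x \<in> points K" and y: "y \<in> points K" and disj: "supp x \<inter> supp y = {}"
  shows "1 \<le> path_metric K x y"
  using connected_complex_chain[OF sc conn x y] half_l1_dist_le_path_metric[OF sc]
    half_l1_dist_disjoint[OF sc x y disj] by metis

section \<open>The bilinear extension\<close>

lemma bilin_ext_vpt: "bilin_ext d (vpt u) (vpt v) = d u v"
  unfolding bilin_ext_def supp_vpt by (simp add: vpt_def)

lemma bilin_ext_iterated: "bilin_ext d x y = (\<Sum>u\<in>supp x. x u * (\<Sum>v\<in>supp y. y v * d u v))"
  by (simp add: bilin_ext_def sum_distrib_left mult.assoc)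

locale metric_complex =
  fixes K :: "'v set set" and dh :: "'v \<Rightarrow> 'v \<Rightarrow> real"
  assumes simplicial_complex: "simplicial_complex K"
    and metric: "metric_on (vertices K) dh"
begin

abbreviation D :: "('v \<Rightarrow> real) \<Rightarrow> ('v \<Rightarrow> real) \<Rightarrow> real" where
  "D \<equiv> bilin_ext dh"

lemmas pointsD' = pointsD[OF _ simplicial_complex]

lemma dh_nonneg: "u \<in> vertices K \<Longrightarrow> v \<in> vertices K \<Longrightarrow> 0 \<le> dh u v"
  and dh_eq_0_iff: "u \<in> vertices K \<Longrightarrow> v \<in> vertices K \<Longrightarrow> dh u v = 0 \<longleftrightarrow> u = v"
  and dh_commute: "u \<in> vertices K \<Longrightarrow> v \<in> vertices K \<Longrightarrow> dh u v = dh v u"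
  and dh_triangle:
    "u \<in> vertices K \<Longrightarrow> v \<in> vertices K \<Longrightarrow> w \<in> vertices K \<Longrightarrow> dh u w \<le> dh u v + dh v w"
  using metric unfolding metric_on_def by auto

lemma bilin_ext_nonneg: "x \<in> points K \<Longrightarrow> y \<in> points K \<Longrightarrow> 0 \<le> D x y"
  unfolding bilin_ext_def using pointsD'[of x] pointsD'[of y]
  by (intro sum_nonneg mult_nonneg_nonneg dh_nonneg) auto

lemma bilin_ext_commute:
  assumes x: "x \<in> points K" and y: "y \<in> points K"
  shows "D x y = D y x"
proof -
  have "D x y = (\<Sum>v\<in>supp y. \<Sum>u\<in>supp x. x u * y v * dh u v)"
    unfolding bilin_ext_def by (rule sum.swap)
  also have "\<dots> = D y x"
    unfolding bilin_ext_def using pointsD'(4)[OF x] pointsD'(4)[OF y]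
    by (intro sum.cong refl) (auto simp: dh_commute[of _ "_ :: 'v"] subset_iff mult.commute)
  finally show ?thesis .
qed

lemma bilin_ext_eq_0_imp_eq:
  assumes x: "x \<in> points K" and y: "y \<in> points K" and D0: "D x y = 0"
  shows "x = y"
proof -
  note px = pointsD'[OF x] and py = pointsD'[OF y]
  have nonneg: "0 \<le> x u * y v * dh u v" if "u \<in> supp x" "v \<in> supp y" for u v
    using px py that by (auto intro!: mult_nonneg_nonneg dh_nonneg)
  have "\<forall>u\<in>supp x. (\<Sum>v\<in>supp y. x u * y v * dh u v) = 0"
    using D0 px py nonneg unfolding bilin_ext_def
    by (subst sum_nonneg_eq_0_iff[symmetric]) (auto intro!: sum_nonneg)
  then have terms0: "x u * y v * dh u v = 0" if "u \<in> supp x" "v \<in> supp y" for u v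
    using nonneg py that by (auto simp: sum_nonneg_eq_0_iff)
  have same: "u = v" if "u \<in> supp x" "v \<in> supp y" for u v
    using terms0[OF that] that px(4) py(4) dh_eq_0_iff[of u v] by (auto simp: supp_def)
  obtain w where sx: "supp x = {w}" and sy: "supp y = {w}"
    using px(3) py(3) same by blast
  have "x t = y t" for t
  proof (cases "t = w")
    case True
    then show ?thesis using px(6) py(6) sx sy by simp
  next
    case False
    then have "t \<notin> supp x" "t \<notin> supp y" using sx sy by auto
    then show ?thesis by (simp add: supp_def)
  qed
  then show "x = y" by blast
qed

lemma bilin_ext_triangle:
  assumes x: "x \<in> points K" and y: "y \<in> points K" and z: "z \<in> points K"
  shows "D x z \<le> D x y + D y z"
proof -
  note px = pointsD'[OF x] and py = pointsD'[OF y] and pz = pointsD'[OF z]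
  have row: "(\<Sum>w\<in>supp z. z w * dh u w) \<le> (\<Sum>v\<in>supp y. y v * dh u v) + D y z"
    if u: "u \<in> vertices K" for u
  proof -
    have "(\<Sum>w\<in>supp z. z w * dh u w) = (\<Sum>v\<in>supp y. y v * (\<Sum>w\<in>supp z. z w * dh u w))"
      using py(6) by (simp add: sum_distrib_right[symmetric])
    also have "\<dots> \<le> (\<Sum>v\<in>supp y. y v * (dh u v + (\<Sum>w\<in>supp z. z w * dh v w)))"
    proof (intro sum_mono mult_left_mono)
      fix v assume v: "v \<in> supp y"
      have "(\<Sum>w\<in>supp z. z w * dh u w) \<le> (\<Sum>w\<in>supp z. z w * (dh u v + dh v w))"
        using v py pz u by (intro sum_mono mult_left_mono dh_triangle) auto
      also have "\<dots> = dh u v + (\<Sum>w\<in>supp z. z w * dh v w)"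
        using pz(6) by (simp add: distrib_left sum.distrib sum_distrib_right[symmetric])
      finally show "(\<Sum>w\<in>supp z. z w * dh u w) \<le> dh u v + (\<Sum>w\<in>supp z. z w * dh v w)" .
    qed (use py in auto)
    also have "\<dots> = (\<Sum>v\<in>supp y. y v * dh u v) + D y z"
      by (simp add: distrib_left sum.distrib bilin_ext_iterated)
    finally show ?thesis .
  qed
  have "D x z \<le> (\<Sum>u\<in>supp x. x u * ((\<Sum>v\<in>supp y. y v * dh u v) + D y z))"
    unfolding bilin_ext_iterated[of _ x z] using px by (intro sum_mono mult_left_mono row) auto
  also have "\<dots> = D x y + D y z"
    using px(6) by (simp add: distrib_left sum.distrib bilin_ext_iterated sum_distrib_right[symmetric])
  finally show ?thesis .
qed

lemma bilin_ext_self_le: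
  assumes x: "x \<in> points K" and c: "\<And>\<sigma> u v. \<sigma> \<in> K \<Longrightarrow> u \<in> \<sigma> \<Longrightarrow> v \<in> \<sigma> \<Longrightarrow> dh u v \<le> c"
  shows "D x x \<le> c"
proof -
  note px = pointsD'[OF x]
  have "D x x \<le> (\<Sum>u\<in>supp x. x u * (\<Sum>v\<in>supp x. x v * c))"
    unfolding bilin_ext_iterated using px by (intro sum_mono mult_left_mono c) auto
  also have "\<dots> = c" using px(6) by (simp add: sum_distrib_right[symmetric])
  finally show ?thesis .
qed

lemma bilin_ext_simplex_Lipschitz:
  assumes x: "x \<in> points K" and a: "a \<in> points K" and b: "b \<in> points K"
    and s: "\<sigma> \<in> K" "supp a \<subseteq> \<sigma>" "supp b \<subseteq> \<sigma>"
    and c: "\<And>\<sigma> u v. \<sigma> \<in> K \<Longrightarrow> u \<in> \<sigma> \<Longrightarrow> v \<in> \<sigma> \<Longrightarrow> dh u v \<le> c"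
  shows "D x b - D x a \<le> 2 * c * simplex_dist \<sigma> a b"
proof -
  note px = pointsD'[OF x] and pa = pointsD'[OF a] and pb = pointsD'[OF b]
  have fin: "finite \<sigma>" using simplicial_complex_finite[OF simplicial_complex s(1)] .
  obtain v0 where v0: "v0 \<in> \<sigma>" using s(2) pa(3) by blast
  have \<sigma>: "\<sigma> \<subseteq> vertices K" using simplex_subset_vertices[OF s(1)] .
  have sums: "sum b \<sigma> = 1" "sum a \<sigma> = 1"
    using sum_supp[OF fin s(3)] sum_supp[OF fin s(2)] pa(6) pb(6) by auto
  have row: "(\<Sum>v\<in>supp b. b v * dh u v) - (\<Sum>v\<in>supp a. a v * dh u v) \<le> 2 * c * simplex_dist \<sigma> a b"
    if u: "u \<in> vertices K" for u
  proof -
    have "(\<Sum>v\<in>supp b. b v * dh u v) - (\<Sum>v\<in>supp a. a v * dh u v)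
        = (\<Sum>v\<in>\<sigma>. (b v - a v) * dh u v)"
      using sum_supp_mult[OF fin s(3)] sum_supp_mult[OF fin s(2)]
      by (simp add: left_diff_distrib sum_subtractf)
    also have "\<dots> = (\<Sum>v\<in>\<sigma>. (b v - a v) * (dh u v - dh u v0))"
      \<comment> \<open>the coefficients \<open>b v - a v\<close> sum to zero\<close>
      using sums by (simp add: right_diff_distrib sum_subtractf sum_distrib_right[symmetric])
    also have "\<dots> \<le> (\<Sum>v\<in>\<sigma>. \<bar>b v - a v\<bar> * c)"
    proof (intro sum_mono)
      fix v assume v: "v \<in> \<sigma>"
      have vv: "v \<in> vertices K" "v0 \<in> vertices K" using v v0 \<sigma> by auto
      have "\<bar>dh u v - dh u v0\<bar> \<le> c"
        using dh_triangle[OF u vv] dh_triangle[OF u vv(2,1)] c[OF s(1) v v0] c[OF s(1) v0 v]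
        by (auto simp: abs_le_iff)
      then have "\<bar>b v - a v\<bar> * \<bar>dh u v - dh u v0\<bar> \<le> \<bar>b v - a v\<bar> * c"
        by (intro mult_left_mono) auto
      then show "(b v - a v) * (dh u v - dh u v0) \<le> \<bar>b v - a v\<bar> * c"
        by (metis abs_ge_self abs_mult order_trans)
    qed
    also have "\<dots> = 2 * c * simplex_dist \<sigma> a b"
      unfolding simplex_dist_def by (simp add: sum_distrib_right[symmetric] abs_minus_commute)
    finally show ?thesis .
  qed
  have "D x b - D x a
      = (\<Sum>u\<in>supp x. x u * ((\<Sum>v\<in>supp b. b v * dh u v) - (\<Sum>v\<in>supp a. a v * dh u v)))"
    unfolding bilin_ext_iterated by (simp add: right_diff_distrib sum_subtractf)
  also have "\<dots> \<le> (\<Sum>u\<in>supp x. x u * (2 * c * simplex_dist \<sigma> a b))"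
    using px by (intro sum_mono mult_left_mono row) auto
  also have "\<dots> = 2 * c * simplex_dist \<sigma> a b"
    using px(6) by (simp add: sum_distrib_right[symmetric])
  finally show ?thesis .
qed

lemma bilin_ext_Lipschitz:
  assumes conn: "connected_complex K" and x: "x \<in> points K" and a: "a \<in> points K" and b: "b \<in> points K"
    and c: "\<And>\<sigma> u v. \<sigma> \<in> K \<Longrightarrow> u \<in> \<sigma> \<Longrightarrow> v \<in> \<sigma> \<Longrightarrow> dh u v \<le> c" and "0 \<le> c"
  shows "D x b - D x a \<le> 2 * c * path_metric K a b"
proof -
  obtain l where "chain K a b l" using connected_complex_chain[OF simplicial_complex conn a b] by blast
  moreover have "0 \<le> 2 * c" using \<open>0 \<le> c\<close> by simp
  ultimately show ?thesis
    by (rule path_metric_Lipschitz) (auto intro: bilin_ext_simplex_Lipschitz[OF x _ _ _ _ _ c])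
qed

end

section \<open>Quasi-isometry to the word metric\<close>

lemma graph_dist_edge: "{u, v} \<in> K \<Longrightarrow> u \<noteq> v \<Longrightarrow> graph_dist K u v \<le> 1"
proof -
  assume edge: "{u, v} \<in> K" and "u \<noteq> v"
  then have "is_walk K [u, v]"
    using simplex_subset_vertices[OF edge] unfolding is_walk_def by (auto simp: less_Suc_eq)
  then have "graph_dist K u v \<le> enat (length [u, v] - 1)"
    unfolding graph_dist_def by (intro INF_lower) auto
  then show ?thesis by (simp add: one_enat_def)
qed

lemma quasi_isometric_connected:
  assumes "quasi_isometric K dh A B"
  shows "connected_complex K"
  unfolding connected_complex_def
proof (intro ballI)
  fix u v assume "u \<in> vertices K" "v \<in> vertices K"
  then obtain n where n: "graph_dist K u v = enat n"
    using assms unfolding quasi_isometric_def by blast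
  show "\<exists>ws. is_walk K ws \<and> hd ws = u \<and> last ws = v"
  proof (rule ccontr)
    assume "\<nexists>ws. is_walk K ws \<and> hd ws = u \<and> last ws = v"
    then have no_walk: "{ws. is_walk K ws \<and> hd ws = u \<and> last ws = v} = {}" by blast
    have "graph_dist K u v = \<infinity>" unfolding graph_dist_def no_walk by (simp add: top_enat_def)
    with n show False by simp
  qed
qed

locale quasi_isometric_complex = metric_complex K dh
  for K :: "'v set set" and dh :: "'v \<Rightarrow> 'v \<Rightarrow> real" +
  fixes A B :: real
  assumes A_ge_1: "A \<ge> 1" and B_nonneg: "B \<ge> 0"
    and quasi_isometric: "quasi_isometric K dh A B"
begin

lemma connected: "connected_complex K"
  using quasi_isometric by (rule quasi_isometric_connected)

lemma simplex_dh_le: "\<sigma> \<in> K \<Longrightarrow> u \<in> \<sigma> \<Longrightarrow> v \<in> \<sigma> \<Longrightarrow> dh u v \<le> A + B"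
proof (cases "u = v")
  case True
  assume "\<sigma> \<in> K" "u \<in> \<sigma>"
  then show ?thesis using True dh_eq_0_iff simplex_subset_vertices A_ge_1 B_nonneg by fastforce
next
  case False
  assume \<sigma>: "\<sigma> \<in> K" and uv: "u \<in> \<sigma>" "v \<in> \<sigma>"
  then have "u \<in> vertices K" "v \<in> vertices K" using simplex_subset_vertices by auto
  then obtain n :: nat where n: "graph_dist K u v = enat n" "dh u v \<le> A * real n + B"
    using quasi_isometric unfolding quasi_isometric_def by blast
  have "{u, v} \<in> K" using simplicial_complex_subset[OF simplicial_complex \<sigma>] uv by auto
  then have "enat n \<le> 1" using graph_dist_edge[OF _ False] n(1) by metis
  then have "n \<le> 1" by (simp add: one_enat_def)
  then have "A * real n \<le> A" using A_ge_1 by (simp add: mult_left_le)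
  then show ?thesis using n(2) by simp
qed

lemma bilin_ext_path_Lipschitz:
  "x \<in> points K \<Longrightarrow> a \<in> points K \<Longrightarrow> b \<in> points K \<Longrightarrow>
    D x b - D x a \<le> 2 * (A + B) * path_metric K a b"
  using A_ge_1 B_nonneg by (intro bilin_ext_Lipschitz[OF connected _ _ _ simplex_dh_le]) auto

lemma path_metric_nonneg: "x \<in> points K \<Longrightarrow> y \<in> points K \<Longrightarrow> 0 \<le> path_metric K x y"
  using metric_on_path_metric[OF simplicial_complex connected] unfolding metric_on_def by blast

lemma path_metric_scaled_mono:
  "x \<in> points K \<Longrightarrow> y \<in> points K \<Longrightarrow> 2 * (A + B) * path_metric K x y \<le> 3 * (A + B) * path_metric K x y"
  using path_metric_nonneg A_ge_1 B_nonneg by (intro mult_right_mono) auto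

lemma bilin_ext_le_path_metric:
  assumes x: "x \<in> points K" and y: "y \<in> points K"
  shows "D x y \<le> (A + B) + 2 * (A + B) * path_metric K x y"
proof -
  have "D x x \<le> A + B" using x simplex_dh_le by (rule bilin_ext_self_le)
  then show ?thesis using bilin_ext_path_Lipschitz[OF x x y] by simp
qed

definition extended_metric :: "('v \<Rightarrow> real) \<Rightarrow> ('v \<Rightarrow> real) \<Rightarrow> real" where
  "extended_metric x y = min (D x y) (3 * (A + B) * path_metric K x y)"

lemma metric_on_extended_metric: "metric_on (points K) extended_metric"
  unfolding extended_metric_def
proof (rule metric_on_min)
  show "metric_on (points K) (\<lambda>x y. 3 * (A + B) * path_metric K x y)"
    using metric_on_path_metric[OF simplicial_complex connected] A_ge_1 B_nonneg
    by (intro metric_on_scale) auto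
  fix x y z assume x: "x \<in> points K" and y: "y \<in> points K" and z: "z \<in> points K"
  show "0 \<le> D x y \<and> D x y = D y x \<and> (D x y = 0 \<longrightarrow> x = y)"
    using bilin_ext_nonneg bilin_ext_commute bilin_ext_eq_0_imp_eq x y by blast
  show "D x z \<le> D x y + D y z" using bilin_ext_triangle[OF x y z] .
  show "D x z \<le> D x y + 3 * (A + B) * path_metric K y z"
    using bilin_ext_path_Lipschitz[OF x y z] path_metric_scaled_mono[OF y z] by simp
qed

lemma extended_metric_vpt:
  assumes "u \<in> vertices K" "v \<in> vertices K"
  shows "extended_metric (vpt u) (vpt v) = dh u v"
proof -
  have pts: "vpt u \<in> points K" "vpt v \<in> points K"
    using vpt_in_points[OF simplicial_complex] assms by auto
  have "dh u u = 0" using dh_eq_0_iff assms by simp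
  then have "dh u v \<le> 3 * (A + B) * path_metric K (vpt u) (vpt v)"
    using bilin_ext_path_Lipschitz[OF pts(1,1,2)] path_metric_scaled_mono[OF pts]
    by (simp add: bilin_ext_vpt)
  then show ?thesis unfolding extended_metric_def bilin_ext_vpt by simp
qed

lemma extended_metric_disjoint:
  assumes x: "x \<in> points K" and y: "y \<in> points K" and disj: "supp x \<inter> supp y = {}"
  shows "extended_metric x y = D x y"
proof -
  have "1 \<le> path_metric K x y"
    using path_metric_ge_1_disjoint[OF simplicial_complex connected x y disj] .
  then have "(A + B) * 1 \<le> (A + B) * path_metric K x y"
    using A_ge_1 B_nonneg by (intro mult_left_mono) auto
  then have "D x y \<le> 3 * (A + B) * path_metric K x y"
    using bilin_ext_le_path_metric[OF x y] by (simp add: algebra_simps)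
  then show ?thesis unfolding extended_metric_def by simp
qed

lemma extended_metric_bounds:
  assumes x: "x \<in> points K" and y: "y \<in> points K"
  shows "D x y - (A + B) \<le> extended_metric x y" and "extended_metric x y \<le> D x y"
  using bilin_ext_le_path_metric[OF x y] path_metric_scaled_mono[OF x y] A_ge_1 B_nonneg
  unfolding extended_metric_def by auto

end

theorem mainTheorem7:
  fixes K :: "'v set set" and dh :: "'v \<Rightarrow> 'v \<Rightarrow> real" and A B :: real
  assumes "simplicial_complex K"
    and "metric_on (vertices K) dh"
    and "A \<ge> 1" and "B \<ge> 0"
    and "quasi_isometric K dh A B"
  shows "\<exists>dt :: ('v \<Rightarrow> real) \<Rightarrow> ('v \<Rightarrow> real) \<Rightarrow> real.
           (\<forall>x\<in>points K. \<forall>y\<in>points K.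
              dt x y = min (bilin_ext dh x y) (3 * (A + B) * path_metric K x y)) \<and>
           metric_on (points K) dt \<and>
           (\<forall>u\<in>vertices K. \<forall>v\<in>vertices K. dt (vpt u) (vpt v) = dh u v) \<and>
           (\<forall>x\<in>points K. \<forall>y\<in>points K. supp x \<inter> supp y = {} \<longrightarrow> dt x y = bilin_ext dh x y) \<and>
           (\<exists>B'\<ge>0. \<forall>x\<in>points K. \<forall>y\<in>points K.
              bilin_ext dh x y - B' \<le> dt x y \<and> dt x y \<le> bilin_ext dh x y + B')"
proof -
  interpret quasi_isometric_complex K dh A B
    using assms by unfold_locales
  show ?thesis
  proof (intro exI[of _ extended_metric] conjI)
    show "\<forall>x\<in>points K. \<forall>y\<in>points K.
        extended_metric x y = min (bilin_ext dh x y) (3 * (A + B) * path_metric K x y)"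
      by (simp add: extended_metric_def)
    show "metric_on (points K) extended_metric" by (rule metric_on_extended_metric)
    show "\<forall>u\<in>vertices K. \<forall>v\<in>vertices K. extended_metric (vpt u) (vpt v) = dh u v"
      using extended_metric_vpt by blast
    show "\<forall>x\<in>points K. \<forall>y\<in>points K. supp x \<inter> supp y = {} \<longrightarrow> extended_metric x y = bilin_ext dh x y"
      using extended_metric_disjoint by blast
    show "\<exists>B'\<ge>0. \<forall>x\<in>points K. \<forall>y\<in>points K.
        bilin_ext dh x y - B' \<le> extended_metric x y \<and> extended_metric x y \<le> bilin_ext dh x y + B'"
    proof (intro exI[of _ "A + B"] conjI ballI)
      fix x y assume "x \<in> points K" "y \<in> points K"
      then show "bilin_ext dh x y - (A + B) \<le> extended_metric x y"
        "extended_metric x y \<le> bilin_ext dh x y + (A + B)"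
        using extended_metric_bounds assms(3,4) by fastforce+
    qed (use assms(3,4) in simp)
  qed
qed

end
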